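(* Under the hypotheses and notation of the dual rate result (Assumption 1, Algorithm (DG) started at $\lambda^0\in\mathbb D$, $\bar\kappa$ an error-bound constant valid on $\{\lambda\in\mathbb D:\mathcal T(\lambda)\le\mathcal T(\lambda^0)\}$, $\rho=\frac{4(1+\bar\kappa)}{1+4(1+\bar\kappa)}$), for all $k\ge1$, \[ \big\|[Gz^k-g]_{\mathbb D}\big\|_{W^{-1}}\le \rho^{\frac{k-2}{2}}\,\mathcal R(\lambda^0). \]
   Context: Standing setup. Consider $\min_{z}\ f(z)=\sum_{i=1}^M f_i(z_i)$ subject to $Az=b$, $Cz\le c$, where $z=(z_1,\dots,z_M)$, $z_i\in\mathbb{R}^{n_i}$, $n=\sum_i n_i$, $A\in\mathbb{R}^{p\times n}$, $C\in\mathbb{R}^{q\times n}$, $b\in\mathbb{R}^p$, $c\in\mathbb{R}^q$, and each $f_i:\mathbb{R}^{n_i}\to\mathbb{R}$ is convex. The rows are partitioned into $\bar M$ blocks: $A$ has blocks $A_{ji}\in\mathbb{R}^{p_j\times n_i}$ and $C$ has blocks $C_{ji}\in\mathbb{R}^{q_j\times n_i}$. A matrix $E\in\{0,1\}^{\bar M\times M}$ is given such that $E_{ji}=0$ implies $A_{ji}=0$ and $C_{ji}=0$; $\bar{\mathcal N}_i=\{j: E_{ji}\neq 0\}$, $\mathcal N_j=\{i:E_{ji}\ne 0\}$. Let $G=\begin{bmatrix}A\\ C\end{bmatrix}$, $g=\begin{bmatrix}b\\ c\end{bmatrix}$, $\lambda=(\nu,\mu)$, $\mathbb{D}=\mathbb{R}^p\times\mathbb{R}^q_+$,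 $\mathcal L(z,\lambda)=f(z)+\langle\lambda,Gz-g\rangle$, $d(\lambda)=\min_{z}\mathcal L(z,\lambda)$, $\nabla d(\lambda)=Gz(\lambda)-g$ with $z(\lambda)$ the unique minimizer of $\mathcal L(\cdot,\lambda)$. $L_{d_i}=\big\|\begin{bmatrix}[A_{ji}]_{j\in\bar{\mathcal N}_i}\\ [C_{ji}]_{j\in\bar{\mathcal N}_i}\end{bmatrix}\big\|^2/\sigma_i$; $W=\mathrm{diag}(W_\nu,W_\mu)$, $W_\nu=\mathrm{diag}\big(\sum_{i\in\mathcal N_j}L_{d_i}I_{p_j};\ j\big)$, $W_\mu=\mathrm{diag}\big(\sum_{i\in\mathcal N_j}L_{d_i}I_{q_j};\ j\big)$, assumed positive definite; $\|x\|_W=\sqrt{x^TWx}$, $\|x\|_{W^{-1}}=\sqrt{x^TW^{-1}x}$. Assumption 1: (a) each $f_i$ is $\sigma_i$-strongly convex and has $L_i$-Lipschitz gradient; (b) $A$ has full row rank and there is $\tilde z$ with $A\tilde z=b$, $C\tilde z<c$. Then the set $\Lambda^*$ of maximizers of $d$ over $\mathbb D$ is nonempty and bounded, and $\max_{\mathbb D}d=f^*$. $[x]^W_S$ is the $\|\cdot\|_W$-projection onto $S$; $[x]_{\mathbb D}$ is the Euclidean projection onto $\mathbb D$ (first $p$ coordinates unchanged, positive part of last $q$). $\nabla^+ d(\lambda)=[\lambda+W^{-1}\nabla d(\lambda)]^W_{\mathbb D}-\lambda$. $\mathcal R(\lambda)=\min_{\lambda^*\in\Lambda^*}\|\lambda^*-\lambda\|_W$,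 $\mathcal T(\lambda)=\max_{\lambda^*\in\Lambda^*}\|\lambda-\lambda^*\|_W$. $\bar\kappa$ is a constant with $\|\lambda-[\lambda]^W_{\Lambda^*}\|_W\le\bar\kappa\|\nabla^+d(\lambda)\|_W$ for all $\lambda\in\mathbb D$ with $\mathcal T(\lambda)\le\mathcal T(\lambda^0)$. Algorithm (DG): given $\lambda^0\in\mathbb D$, for $k\ge0$ set $z^k=\arg\min_{z}\mathcal L(z,\lambda^k)$ and $\lambda^{k+1}=[\lambda^k+W^{-1}\nabla d(\lambda^k)]_{\mathbb D}$. *)

theory Defs
  imports "HOL-Analysis.Analysis"
begin

text \<open>Primal coordinates are indexed by a finite type 'n; a map
  blk :: 'n => 'b assigns each coordinate to its block i (so z_i is the
  restriction of z to the coordinates c with blk c = i). The rows of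
  G = [A; C] are indexed by a finite type 'r; isIneq r says that row r is a
  row of C (inequality) rather than of A (equality). rb :: 'r => 'j assigns
  each row to its row block j. E j i is the 0/1 matrix E as a predicate.\<close>

definition blockproj :: "('n \<Rightarrow> 'b) \<Rightarrow> 'b \<Rightarrow> real^'n \<Rightarrow> real^'n" where
  "blockproj blk i x = (\<chi> c. if blk c = i then x $ c else 0)"

definition depends_on_block :: "('n \<Rightarrow> 'b) \<Rightarrow> 'b \<Rightarrow> (real^'n \<Rightarrow> real) \<Rightarrow> bool" where
  "depends_on_block blk i h \<longleftrightarrow>
     (\<forall>x y. (\<forall>c. blk c = i \<longrightarrow> x $ c = y $ c) \<longrightarrow> h x = h y)"

definition block_strongly_convex ::
  "('n \<Rightarrow> 'b) \<Rightarrow> 'b \<Rightarrow> real \<Rightarrow> (real^'n \<Rightarrow> real) \<Rightarrow> bool" where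
  "block_strongly_convex blk i \<sigma> h \<longleftrightarrow>
     (\<forall>x y t. 0 \<le> t \<and> t \<le> 1 \<longrightarrow>
        h (t *\<^sub>R x + (1 - t) *\<^sub>R y) \<le> t * h x + (1 - t) * h y
          - \<sigma> / 2 * t * (1 - t) * (norm (blockproj blk i (x - y)))\<^sup>2)"

definition block_lipschitz_gradient ::
  "('n \<Rightarrow> 'b) \<Rightarrow> 'b \<Rightarrow> real \<Rightarrow> (real^'n \<Rightarrow> real) \<Rightarrow> bool" where
  "block_lipschitz_gradient blk i L h \<longleftrightarrow>
     (\<exists>gr. (\<forall>x. GDERIV h x :> gr x) \<and>
           (\<forall>x y. norm (gr x - gr y) \<le> L * norm (blockproj blk i (x - y))))"

definition Lag :: "('b \<Rightarrow> real^'n \<Rightarrow> real) \<Rightarrow> real^'n^'r \<Rightarrow> real^'r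
    \<Rightarrow> real^'n \<Rightarrow> real^'r \<Rightarrow> real" where
  "Lag f G g z lm = (\<Sum>i\<in>UNIV. f i z) + inner lm (G *v z - g)"

definition dualfun :: "('b \<Rightarrow> real^'n \<Rightarrow> real) \<Rightarrow> real^'n^'r \<Rightarrow> real^'r
    \<Rightarrow> real^'r \<Rightarrow> real" where
  "dualfun f G g lm = Inf (range (\<lambda>z. Lag f G g z lm))"

definition zopt :: "('b \<Rightarrow> real^'n \<Rightarrow> real) \<Rightarrow> real^'n^'r \<Rightarrow> real^'r
    \<Rightarrow> real^'r \<Rightarrow> real^'n" where
  "zopt f G g lm = (THE z. \<forall>z'. Lag f G g z lm \<le> Lag f G g z' lm)"

definition dualgrad :: "('b \<Rightarrow> real^'n \<Rightarrow> real) \<Rightarrow> real^'n^'r \<Rightarrow> real^'r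
    \<Rightarrow> real^'r \<Rightarrow> real^'r" where
  "dualgrad f G g lm = G *v zopt f G g lm - g"

definition Dset :: "('r \<Rightarrow> bool) \<Rightarrow> (real^'r) set" where
  "Dset isIneq = {lm. \<forall>r. isIneq r \<longrightarrow> 0 \<le> lm $ r}"

definition projD :: "('r \<Rightarrow> bool) \<Rightarrow> real^'r \<Rightarrow> real^'r" where
  "projD isIneq x = (\<chi> r. if isIneq r then max 0 (x $ r) else x $ r)"

text \<open>Lipschitz constant L_{d_i}: squared spectral norm of the stacked
  block [A_ji; C_ji] (j in bar N_i) divided by sigma_i.\<close>
definition Ld :: "real^'n^'r \<Rightarrow> ('n \<Rightarrow> 'b) \<Rightarrow> ('r \<Rightarrow> 'j) \<Rightarrow> ('j \<Rightarrow> 'b \<Rightarrow> bool)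
    \<Rightarrow> ('b \<Rightarrow> real) \<Rightarrow> 'b \<Rightarrow> real" where
  "Ld G blk rb E \<sigma> i =
     (onorm (\<lambda>x::real^'n. \<chi> r. if E (rb r) i
                 then (\<Sum>c\<in>{c. blk c = i}. G $ r $ c * x $ c) else 0))\<^sup>2 / \<sigma> i"

text \<open>Diagonal entry of W for row r (row block j = rb r).\<close>
definition Wdiag :: "real^'n^'r \<Rightarrow> ('n \<Rightarrow> 'b) \<Rightarrow> ('r \<Rightarrow> 'j) \<Rightarrow> ('j \<Rightarrow> 'b \<Rightarrow> bool)
    \<Rightarrow> ('b \<Rightarrow> real) \<Rightarrow> 'r \<Rightarrow> real" where
  "Wdiag G blk rb E \<sigma> r = (\<Sum>i\<in>{i. E (rb r) i}. Ld G blk rb E \<sigma> i)"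

definition Wnorm :: "('r \<Rightarrow> real) \<Rightarrow> real^'r \<Rightarrow> real" where
  "Wnorm w x = sqrt (\<Sum>r\<in>UNIV. w r * (x $ r)\<^sup>2)"

definition Winvnorm :: "('r \<Rightarrow> real) \<Rightarrow> real^'r \<Rightarrow> real" where
  "Winvnorm w x = sqrt (\<Sum>r\<in>UNIV. (x $ r)\<^sup>2 / w r)"

definition Winv :: "('r \<Rightarrow> real) \<Rightarrow> real^'r \<Rightarrow> real^'r" where
  "Winv w x = (\<chi> r. x $ r / w r)"

definition projW :: "('r \<Rightarrow> real) \<Rightarrow> (real^'r) set \<Rightarrow> real^'r \<Rightarrow> real^'r" where
  "projW w S x = (SOME y. y \<in> S \<and> (\<forall>y'\<in>S. Wnorm w (x - y) \<le> Wnorm w (x - y')))"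

definition dualopt :: "('b \<Rightarrow> real^'n \<Rightarrow> real) \<Rightarrow> real^'n^'r \<Rightarrow> real^'r
    \<Rightarrow> ('r \<Rightarrow> bool) \<Rightarrow> (real^'r) set" where
  "dualopt f G g isIneq =
     {lm \<in> Dset isIneq. \<forall>\<mu> \<in> Dset isIneq. dualfun f G g \<mu> \<le> dualfun f G g lm}"

definition gradplus :: "('b \<Rightarrow> real^'n \<Rightarrow> real) \<Rightarrow> real^'n^'r \<Rightarrow> real^'r
    \<Rightarrow> ('r \<Rightarrow> bool) \<Rightarrow> ('r \<Rightarrow> real) \<Rightarrow> real^'r \<Rightarrow> real^'r" where
  "gradplus f G g isIneq w lm =
     projW w (Dset isIneq) (lm + Winv w (dualgrad f G g lm)) - lm"

definition Rdist :: "('r \<Rightarrow> real) \<Rightarrow> (real^'r) set \<Rightarrow> real^'r \<Rightarrow> real" where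
  "Rdist w S lm = Inf ((\<lambda>s. Wnorm w (s - lm)) ` S)"

definition Tdist :: "('r \<Rightarrow> real) \<Rightarrow> (real^'r) set \<Rightarrow> real^'r \<Rightarrow> real" where
  "Tdist w S lm = Sup ((\<lambda>s. Wnorm w (lm - s)) ` S)"

end

theory Submission
  imports Defs
begin

(* The argument is the classical one for projected gradient ascent on a smooth
   concave function under an error bound, carried out in the W-geometry:
   (1) the Lagrangian is strongly convex in the block-weighted norm
       sum_c sigma_(blk c) v_c^2, so its minimiser is unique and it grows
       quadratically around it;
   (2) the sparsity pattern E gives |G v|^2_(W^-1) <= sum_c sigma_(blk c) v_c^2,
       which makes the dual function d smooth (dualfun_smooth);
   (3) with the variational inequality of the projection onto D this yields the
       one-step inequality of projected ascent (dual_ascent_step);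
   (4) Slater's condition and full row rank of A make the dual optimal set
       nonempty and compact (dualopt_nonempty_compact);
   (5) a lemma on real sequences (linear_rate) and a locale for abstract
       projected ascent turn the one-step inequality and the error bound into
       linear decay of the step lengths (step_length_rate).
   The theorem follows since the projected residual is bounded by the step
   length (projD_residual_le_step). *)

definition Wsq :: "('r \<Rightarrow> real) \<Rightarrow> real^'r \<Rightarrow> real" where
  "Wsq w x = (\<Sum>r\<in>UNIV. w r * (x $ r)\<^sup>2)"

definition Winvsq :: "('r \<Rightarrow> real) \<Rightarrow> real^'r \<Rightarrow> real" where
  "Winvsq w x = (\<Sum>r\<in>UNIV. (x $ r)\<^sup>2 / w r)"

definition Winner :: "('r \<Rightarrow> real) \<Rightarrow> real^'r \<Rightarrow> real^'r \<Rightarrow> real" where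
  "Winner w x y = (\<Sum>r\<in>UNIV. w r * (x $ r) * (y $ r))"

lemma inner_vec_sum: "inner (x::real^'r::finite) y = (\<Sum>r\<in>UNIV. x$r * y$r)"
  by (simp add: inner_vec_def)

lemma norm_sq_vec_sum: "(norm (v::real^'n::finite))\<^sup>2 = (\<Sum>c\<in>UNIV. (v$c)\<^sup>2)"
  unfolding power2_norm_eq_inner inner_vec_sum by (simp add: power2_eq_square)

lemma Wnorm_Wsq: "Wnorm w x = sqrt (Wsq w x)"
  unfolding Wnorm_def Wsq_def ..

lemma Winvnorm_Winvsq: "Winvnorm w x = sqrt (Winvsq w x)"
  unfolding Winvnorm_def Winvsq_def ..

lemma Wsq_nonneg: "(\<And>r. w r > 0) \<Longrightarrow> Wsq w x \<ge> 0"
  unfolding Wsq_def by (intro sum_nonneg) (simp add: less_imp_le)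

lemma Wnorm_sq: assumes "\<And>r. w r > 0" shows "(Wnorm w x)\<^sup>2 = Wsq w x"
  unfolding Wnorm_Wsq using Wsq_nonneg[OF assms] by simp

lemma Wnorm_nonneg: assumes "\<And>r. w r > 0" shows "Wnorm w x \<ge> 0"
  unfolding Wnorm_Wsq using Wsq_nonneg[OF assms] by simp

lemma Wsq_diff: "Wsq w (x - y) = Wsq w x - 2 * Winner w x y + Wsq w y"
  unfolding Wsq_def Winner_def sum_distrib_left sum_subtractf[symmetric] sum.distrib[symmetric]
  by (rule sum.cong) (simp_all add: power2_eq_square algebra_simps)

lemma Wsq_minus_commute: "Wsq w (x - y) = Wsq w (y - x)"
  unfolding Wsq_def by (simp add: power2_commute)

lemma Winner_zero: "Winner w x 0 = 0"
  unfolding Winner_def by simp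

lemma Wnorm_minus_commute: "Wnorm w (x - y) = Wnorm w (y - x)"
  unfolding Wnorm_def by (simp add: power2_commute)

lemma Winner_le_Wnorm:
  assumes wp: "\<And>r. w r > 0"
  shows "Winner w x y \<le> Wnorm w x * Wnorm w y"
proof -
  have "(Winner w x y)\<^sup>2 = (\<Sum>r\<in>UNIV. (sqrt (w r) * x$r) * (sqrt (w r) * y$r))\<^sup>2"
    unfolding Winner_def by (rule arg_cong[where f="\<lambda>t. t\<^sup>2"], rule sum.cong)
      (use wp in \<open>auto simp: less_imp_le algebra_simps\<close>)
  also have "\<dots> \<le> (\<Sum>r\<in>UNIV. (sqrt (w r) * x$r)\<^sup>2) * (\<Sum>r\<in>UNIV. (sqrt (w r) * y$r)\<^sup>2)"
    by (rule Cauchy_Schwarz_ineq_sum)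
  also have "\<dots> = Wsq w x * Wsq w y"
    unfolding Wsq_def power_mult_distrib using wp by (simp add: less_imp_le)
  finally have "\<bar>Winner w x y\<bar> \<le> sqrt (Wsq w x * Wsq w y)"
    using real_sqrt_le_mono by fastforce
  then show ?thesis unfolding Wnorm_Wsq real_sqrt_mult by simp
qed

text \<open>Over a nonempty compact set the W-distance to a point is attained; this
  gives meaning to projW, Rdist and Tdist on the dual optimal set.\<close>
lemma Wdist_attains_min:
  assumes "compact S" "S \<noteq> {}"
  shows "\<exists>s\<in>S. \<forall>s'\<in>S. Wnorm w (x - s) \<le> Wnorm w (x - s')"
  by (rule continuous_attains_inf) (use assms in \<open>auto simp: Wnorm_def intro!: continuous_intros\<close>)

lemma projW_in:
  assumes "compact S" "S \<noteq> {}"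
  shows "projW w S x \<in> S"
proof -
  have "\<exists>y. y \<in> S \<and> (\<forall>y'\<in>S. Wnorm w (x - y) \<le> Wnorm w (x - y'))"
    using Wdist_attains_min[OF assms, of w x] by blast
  then show ?thesis unfolding projW_def by (rule someI2_ex) blast
qed

lemma Rdist_attained:
  assumes "compact S" "S \<noteq> {}"
  obtains s where "s \<in> S" "Rdist w S x = Wnorm w (s - x)"
proof -
  obtain s where s: "s \<in> S" "\<And>s'. s' \<in> S \<Longrightarrow> Wnorm w (x - s) \<le> Wnorm w (x - s')"
    using Wdist_attains_min[OF assms, of w x] by blast
  have "Rdist w S x = Wnorm w (s - x)"
    unfolding Rdist_def by (rule cInf_eq_minimum) (use s in \<open>auto simp: Wnorm_minus_commute\<close>)
  with s(1) show ?thesis by (rule that)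
qed

section \<open>Strong convexity of the Lagrangian\<close>

text \<open>The block-weighted squared norm sum_c sigma_(blk c) v_c^2, i.e.
  sum_i sigma_i |v_i|^2: the modulus of strong convexity of f = sum_i f_i.\<close>
definition sigma_sq :: "('b \<Rightarrow> real) \<Rightarrow> ('n \<Rightarrow> 'b) \<Rightarrow> real^'n \<Rightarrow> real" where
  "sigma_sq \<sigma> blk v = (\<Sum>c\<in>UNIV. \<sigma> (blk c) * (v$c)\<^sup>2)"

lemma norm_blockproj_sq:
  "(norm (blockproj blk i (v::real^'n::finite)))\<^sup>2 = (\<Sum>c\<in>UNIV. if blk c = i then (v$c)\<^sup>2 else 0)"
  unfolding norm_sq_vec_sum blockproj_def by (rule sum.cong) auto

lemma sum_over_blocks:
  fixes h :: "'n::finite \<Rightarrow> real" and s :: "'b::finite \<Rightarrow> real"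
  shows "(\<Sum>i\<in>UNIV. s i * (\<Sum>c\<in>UNIV. if blk c = i then h c else 0)) = (\<Sum>c\<in>UNIV. s (blk c) * h c)"
proof -
  have "(\<Sum>i\<in>UNIV. s i * (\<Sum>c\<in>UNIV. if blk c = i then h c else 0))
      = (\<Sum>c\<in>UNIV. \<Sum>i\<in>UNIV. if blk c = i then s i * h c else 0)"
    by (subst sum.swap) (simp add: sum_distrib_left if_distrib cong: if_cong)
  also have "\<dots> = (\<Sum>c\<in>UNIV. s (blk c) * h c)"
    by (rule sum.cong) (auto simp: sum.delta)
  finally show ?thesis .
qed

lemma sigma_sq_nonneg: "(\<And>i. \<sigma> i > 0) \<Longrightarrow> sigma_sq \<sigma> blk v \<ge> 0"
  unfolding sigma_sq_def by (intro sum_nonneg) (simp add: less_imp_le)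

lemma sigma_sq_eq_0:
  assumes "\<And>i. \<sigma> i > 0" "sigma_sq \<sigma> blk v = 0"
  shows "v = 0"
proof -
  have "\<forall>c\<in>UNIV. \<sigma> (blk c) * (v$c)\<^sup>2 = 0"
    using assms unfolding sigma_sq_def
    by (subst sum_nonneg_eq_0_iff[symmetric]) (auto simp: less_imp_le)
  then show ?thesis using assms(1) by (auto simp: vec_eq_iff) (metis less_irrefl)
qed

lemma sigma_sq_ge_norm:
  fixes \<sigma> :: "'b::finite \<Rightarrow> real"
  assumes "\<And>i. \<sigma> i > 0"
  obtains s0 where "s0 > 0" "\<And>v::real^'n::finite. sigma_sq \<sigma> blk v \<ge> s0 * (norm v)\<^sup>2"
proof
  show "Min (range \<sigma>) > 0" using assms by (subst Min_gr_iff) auto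
  have "Min (range \<sigma>) \<le> \<sigma> i" for i by (rule Min_le) auto
  then show "sigma_sq \<sigma> blk v \<ge> Min (range \<sigma>) * (norm v)\<^sup>2" for v :: "real^'n"
    unfolding sigma_sq_def norm_sq_vec_sum sum_distrib_left
    by (intro sum_mono) (simp add: mult_right_mono)
qed

lemma Lag_sum: "Lag f G g z lm = (\<Sum>i\<in>UNIV. f i z) + (\<Sum>r\<in>UNIV. lm$r * ((G *v z)$r - g$r))"
  by (simp add: Lag_def inner_vec_sum)

lemma Lag_shift_multiplier:
  "Lag f G g z \<mu> = Lag f G g z a + (\<Sum>r\<in>UNIV. (\<mu>$r - a$r) * ((G *v z)$r - g$r))"
  unfolding Lag_sum by (simp add: sum.distrib[symmetric] algebra_simps sum_subtractf[symmetric])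

lemma Lag_convex_multiplier:
  "Lag f G g z ((1 - t) *\<^sub>R x + t *\<^sub>R y) = (1 - t) * Lag f G g z x + t * Lag f G g z y"
proof -
  have "(\<Sum>r\<in>UNIV. ((1 - t) *\<^sub>R x + t *\<^sub>R y)$r * ((G *v z)$r - g$r))
     = (1 - t) * (\<Sum>r\<in>UNIV. x$r * ((G *v z)$r - g$r)) + t * (\<Sum>r\<in>UNIV. y$r * ((G *v z)$r - g$r))"
    unfolding sum_distrib_left sum.distrib[symmetric]
    by (rule sum.cong) (simp_all add: algebra_simps)
  then show ?thesis unfolding Lag_sum by (simp add: algebra_simps)
qed

text \<open>Blockwise strong convexity of the f_i makes the Lagrangian strongly convex
  with respect to sigma_sq (the constraint term is affine in z).\<close>
lemma Lag_strongly_convex: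
  fixes f :: "'b::finite \<Rightarrow> real^'n::finite \<Rightarrow> real"
  assumes sc: "\<And>i. block_strongly_convex blk i (\<sigma> i) (f i)" and t: "0 \<le> t" "t \<le> 1"
  shows "Lag f G g (t *\<^sub>R x + (1 - t) *\<^sub>R y) lm \<le> t * Lag f G g x lm + (1 - t) * Lag f G g y lm
          - t * (1 - t) / 2 * sigma_sq \<sigma> blk (x - y)"
proof -
  define cc where "cc = t * (1 - t) / 2"
  define B where "B i = (\<Sum>c\<in>UNIV. if blk c = i then ((x - y)$c)\<^sup>2 else 0)" for i
  have fi: "f i (t *\<^sub>R x + (1 - t) *\<^sub>R y) \<le> t * f i x + (1 - t) * f i y - cc * (\<sigma> i * B i)" for i
    using sc[of i] t unfolding block_strongly_convex_def norm_blockproj_sq B_def cc_def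
    by (auto simp: algebra_simps)
  have "(\<Sum>i\<in>UNIV. f i (t *\<^sub>R x + (1 - t) *\<^sub>R y))
      \<le> (\<Sum>i\<in>UNIV. t * f i x + (1 - t) * f i y - cc * (\<sigma> i * B i))"
    by (rule sum_mono) (rule fi)
  also have "\<dots> = t * (\<Sum>i\<in>UNIV. f i x) + (1 - t) * (\<Sum>i\<in>UNIV. f i y) - cc * (\<Sum>i\<in>UNIV. \<sigma> i * B i)"
    by (simp add: sum.distrib sum_subtractf sum_distrib_left)
  also have "(\<Sum>i\<in>UNIV. \<sigma> i * B i) = sigma_sq \<sigma> blk (x - y)"
    unfolding sigma_sq_def B_def sum_over_blocks ..
  finally have A: "(\<Sum>i\<in>UNIV. f i (t *\<^sub>R x + (1 - t) *\<^sub>R y))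
      \<le> t * (\<Sum>i\<in>UNIV. f i x) + (1 - t) * (\<Sum>i\<in>UNIV. f i y) - cc * sigma_sq \<sigma> blk (x - y)" .
  have "(\<Sum>r\<in>UNIV. lm$r * ((G *v (t *\<^sub>R x + (1 - t) *\<^sub>R y))$r - g$r))
     = t * (\<Sum>r\<in>UNIV. lm$r * ((G *v x)$r - g$r)) + (1 - t) * (\<Sum>r\<in>UNIV. lm$r * ((G *v y)$r - g$r))"
    by (simp add: matrix_vector_right_distrib matrix_vector_mult_scaleR sum_distrib_left
        sum.distrib[symmetric] algebra_simps)
  then show ?thesis unfolding Lag_sum cc_def[symmetric] using A by (simp add: algebra_simps)
qed

lemma Lag_minus_sigma_sq_convex:
  fixes f :: "'b::finite \<Rightarrow> real^'n::finite \<Rightarrow> real"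
  assumes sc: "\<And>i. block_strongly_convex blk i (\<sigma> i) (f i)"
  shows "convex_on UNIV (\<lambda>x. Lag f G g x lm - sigma_sq \<sigma> blk x / 2)"
proof (rule convex_onI)
  fix t :: real and x y :: "real^'n"
  assume t: "0 < t" "t < 1"
  have "Lag f G g (t *\<^sub>R y + (1 - t) *\<^sub>R x) lm \<le> t * Lag f G g y lm + (1 - t) * Lag f G g x lm
          - t * (1 - t) / 2 * sigma_sq \<sigma> blk (y - x)"
    using Lag_strongly_convex[OF sc, where t=t and x=y and y=x] t by simp
  moreover have "t * sigma_sq \<sigma> blk y + (1 - t) * sigma_sq \<sigma> blk x - sigma_sq \<sigma> blk (t *\<^sub>R y + (1 - t) *\<^sub>R x)
     = t * (1 - t) * sigma_sq \<sigma> blk (y - x)"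
    unfolding sigma_sq_def sum_distrib_left sum.distrib[symmetric] sum_subtractf[symmetric]
    by (rule sum.cong) (auto simp: power2_eq_square algebra_simps)
  moreover have "(1 - t) *\<^sub>R x + t *\<^sub>R y = t *\<^sub>R y + (1 - t) *\<^sub>R x" by simp
  ultimately show "Lag f G g ((1 - t) *\<^sub>R x + t *\<^sub>R y) lm - sigma_sq \<sigma> blk ((1 - t) *\<^sub>R x + t *\<^sub>R y) / 2
     \<le> (1 - t) * (Lag f G g x lm - sigma_sq \<sigma> blk x / 2) + t * (Lag f G g y lm - sigma_sq \<sigma> blk y / 2)"
    by (simp add: field_simps)
qed simp

lemma convex_on_lower_bound_norm:
  fixes q :: "'a::euclidean_space \<Rightarrow> real"
  assumes cv: "convex_on UNIV q"
  obtains m c where "\<And>y. q y \<ge> m - c * norm y"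
proof -
  have cont: "continuous_on UNIV q" using convex_on_continuous[OF open_UNIV cv] .
  have "\<exists>x\<in>cball (0::'a) 1. \<forall>y\<in>cball 0 1. q x \<le> q y"
    by (rule continuous_attains_inf) (auto intro: continuous_on_subset[OF cont])
  then obtain x0 where x0: "\<And>y. y \<in> cball 0 1 \<Longrightarrow> q x0 \<le> q y" by blast
  define m where "m = q x0"
  define c where "c = q 0 - m"
  have c0: "c \<ge> 0" unfolding c_def m_def using x0[of 0] by simp
  have "q y \<ge> m - c * norm y" for y
  proof (cases "norm y \<le> 1")
    case True
    then have "q y \<ge> m" unfolding m_def using x0 by simp
    then show ?thesis using c0 by (smt (verit) mult_nonneg_nonneg norm_ge_zero)
  next
    case False
    define n where "n = norm y"
    have n1: "n > 1" using False n_def by simp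
    have "norm ((1 / n) *\<^sub>R y) = 1" unfolding n_def using n1 n_def by auto
    then have qu: "q ((1 / n) *\<^sub>R y) \<ge> m" unfolding m_def using x0 by simp
    have "q ((1 / n) *\<^sub>R y) \<le> (1 - 1/n) * q 0 + (1/n) * q y"
      using convex_onD[OF cv, of "1/n" 0 y] n1 by simp
    then have "n * q ((1 / n) *\<^sub>R y) \<le> (n - 1) * q 0 + q y"
      using n1 by (simp add: field_simps)
    moreover have "n * m \<le> n * q ((1 / n) *\<^sub>R y)" using qu n1 by simp
    ultimately have "q y \<ge> n * m - (n - 1) * q 0" by simp
    then show ?thesis unfolding c_def n_def[symmetric] using n1 c0 c_def
      by (simp add: algebra_simps)
  qed
  then show ?thesis by (rule that)
qed

lemma Lag_bdd_below:
  fixes f :: "'b::finite \<Rightarrow> real^'n::finite \<Rightarrow> real"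
  assumes sc: "\<And>i. block_strongly_convex blk i (\<sigma> i) (f i)" and sp: "\<And>i. \<sigma> i > 0"
  shows "bdd_below (range (\<lambda>z. Lag f G g z lm))"
proof -
  obtain m c where mc: "\<And>y. Lag f G g y lm - sigma_sq \<sigma> blk y / 2 \<ge> m - c * norm y"
    by (rule convex_on_lower_bound_norm[OF Lag_minus_sigma_sq_convex[OF sc, where G=G and g=g and lm=lm]]) blast
  obtain s0 where s0: "s0 > 0" "\<And>v::real^'n. sigma_sq \<sigma> blk v \<ge> s0 * (norm v)\<^sup>2"
    using sigma_sq_ge_norm[where \<sigma>=\<sigma> and blk=blk, OF sp] by blast
  have "Lag f G g y lm \<ge> m - c\<^sup>2 / (2 * s0)" for y
  proof -
    define n where "n = norm y"
    have "Lag f G g y lm \<ge> m - c * n + s0 * n\<^sup>2 / 2"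
      using mc[of y] s0(2)[of y] unfolding n_def by linarith
    moreover have "s0 * n\<^sup>2 / 2 - c * n + c\<^sup>2 / (2 * s0) = (s0 * n - c)\<^sup>2 / (2 * s0)"
      using s0(1) by (simp add: field_simps power2_eq_square)
    moreover have "(s0 * n - c)\<^sup>2 / (2 * s0) \<ge> 0" using s0(1) by simp
    ultimately show ?thesis by linarith
  qed
  then show ?thesis by (intro bdd_belowI2)
qed

lemma Lag_quadratic_growth:
  fixes f :: "'b::finite \<Rightarrow> real^'n::finite \<Rightarrow> real"
  assumes sc: "\<And>i. block_strongly_convex blk i (\<sigma> i) (f i)" and sp: "\<And>i. \<sigma> i > 0"
    and mn: "\<And>z'. Lag f G g x lm \<le> Lag f G g z' lm"
  shows "Lag f G g y lm \<ge> Lag f G g x lm + sigma_sq \<sigma> blk (y - x) / 2"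
proof -
  define a where "a = Lag f G g y lm - Lag f G g x lm"
  define b where "b = sigma_sq \<sigma> blk (y - x) / 2"
  have b0: "b \<ge> 0" unfolding b_def using sigma_sq_nonneg[of \<sigma>, OF sp] by simp
  have key: "a \<ge> (1 - t) * b" if t: "0 < t" "t < 1" for t
  proof -
    have "Lag f G g x lm \<le> Lag f G g (t *\<^sub>R y + (1 - t) *\<^sub>R x) lm" by (rule mn)
    also have "\<dots> \<le> t * Lag f G g y lm + (1 - t) * Lag f G g x lm - t * (1 - t) / 2 * sigma_sq \<sigma> blk (y - x)"
      using Lag_strongly_convex[OF sc, where t=t and x=y and y=x] t by simp
    finally have "t * a \<ge> t * ((1 - t) * b)" unfolding a_def b_def by (simp add: algebra_simps)
    then show ?thesis using t by simp
  qed
  have "a \<ge> b"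
  proof (rule ccontr)
    assume "\<not> a \<ge> b"
    then have ab: "a < b" by simp
    have "a \<ge> 0" using key[of "1/2"] b0 by simp
    define t where "t = (b - a) / (2 * b)"
    have t: "0 < t" "t < 1" unfolding t_def using ab \<open>a \<ge> 0\<close> by (auto simp: field_simps)
    have "(1 - t) * b = (a + b) / 2" unfolding t_def using ab \<open>a \<ge> 0\<close> by (simp add: field_simps)
    then show False using key[OF t] ab by simp
  qed
  then show ?thesis unfolding a_def b_def by simp
qed

lemma Lag_minimizer_unique:
  fixes f :: "'b::finite \<Rightarrow> real^'n::finite \<Rightarrow> real"
  assumes sc: "\<And>i. block_strongly_convex blk i (\<sigma> i) (f i)" and sp: "\<And>i. \<sigma> i > 0"
    and mx: "\<And>z'. Lag f G g x lm \<le> Lag f G g z' lm"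
    and my: "\<And>z'. Lag f G g y lm \<le> Lag f G g z' lm"
  shows "y = x"
proof -
  have "Lag f G g y lm \<ge> Lag f G g x lm + sigma_sq \<sigma> blk (y - x) / 2"
    by (rule Lag_quadratic_growth[OF sc sp mx])
  with my[of x] sigma_sq_nonneg[of \<sigma> blk "y - x", OF sp] have "sigma_sq \<sigma> blk (y - x) = 0"
    by linarith
  then show ?thesis using sigma_sq_eq_0[of \<sigma> blk "y - x", OF sp] by simp
qed

lemma dualfun_le_Lag:
  fixes f :: "'b::finite \<Rightarrow> real^'n::finite \<Rightarrow> real"
  assumes sc: "\<And>i. block_strongly_convex blk i (\<sigma> i) (f i)" and sp: "\<And>i. \<sigma> i > 0"
  shows "dualfun f G g lm \<le> Lag f G g z lm"
  unfolding dualfun_def by (rule cInf_lower) (auto intro: Lag_bdd_below[OF sc sp])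

lemma dualfun_eq_Lag_min:
  assumes "\<And>z'. Lag f G g z lm \<le> Lag f G g z' lm"
  shows "dualfun f G g lm = Lag f G g z lm"
  unfolding dualfun_def by (rule cInf_eq_minimum) (use assms in auto)

lemma dualfun_ge:
  assumes "\<And>z. c \<le> Lag f G g z lm"
  shows "c \<le> dualfun f G g lm"
  unfolding dualfun_def by (rule cInf_greatest) (use assms in auto)

text \<open>As an infimum of affine functions, d is concave, hence continuous.\<close>
lemma dualfun_concave:
  fixes f :: "'b::finite \<Rightarrow> real^'n::finite \<Rightarrow> real" and G :: "real^'n^'r::finite"
  assumes sc: "\<And>i. block_strongly_convex blk i (\<sigma> i) (f i)" and sp: "\<And>i. \<sigma> i > 0"
  shows "convex_on UNIV (\<lambda>l. - dualfun f G g l)"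
proof (rule convex_onI)
  fix t :: real and x y :: "real^'r"
  assume t: "0 < t" "t < 1"
  have "(1 - t) * dualfun f G g x + t * dualfun f G g y \<le> dualfun f G g ((1 - t) *\<^sub>R x + t *\<^sub>R y)"
  proof (rule dualfun_ge)
    fix z
    have "(1 - t) * dualfun f G g x \<le> (1 - t) * Lag f G g z x"
      "t * dualfun f G g y \<le> t * Lag f G g z y"
      using t dualfun_le_Lag[OF sc sp] by (simp_all add: mult_left_mono)
    then show "(1 - t) * dualfun f G g x + t * dualfun f G g y \<le> Lag f G g z ((1 - t) *\<^sub>R x + t *\<^sub>R y)"
      unfolding Lag_convex_multiplier by simp
  qed
  then show "- dualfun f G g ((1 - t) *\<^sub>R x + t *\<^sub>R y) \<le> (1 - t) * - dualfun f G g x + t * - dualfun f G g y"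
    by simp
qed simp

lemma dualfun_continuous:
  fixes f :: "'b::finite \<Rightarrow> real^'n::finite \<Rightarrow> real" and G :: "real^'n^'r::finite"
  assumes sc: "\<And>i. block_strongly_convex blk i (\<sigma> i) (f i)" and sp: "\<And>i. \<sigma> i > 0"
  shows "continuous_on UNIV (dualfun f G g)"
  using continuous_on_minus[OF convex_on_continuous[OF open_UNIV dualfun_concave[OF sc sp]]]
  by simp

lemma gradplus_eq_step:
  fixes f :: "'b::finite \<Rightarrow> real^'n::finite \<Rightarrow> real" and G :: "real^'n^'r::finite"
  assumes sc: "\<And>i. block_strongly_convex blk i (\<sigma> i) (f i)" and sp: "\<And>i. \<sigma> i > 0"
    and mn: "\<And>z'. Lag f G g z lm \<le> Lag f G g z' lm"
    and projD_eq: "\<And>x. projW w (Dset isIneq) x = projD isIneq x"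
  shows "gradplus f G g isIneq w lm = projD isIneq (lm + Winv w (G *v z - g)) - lm"
proof -
  have "zopt f G g lm = z"
    unfolding zopt_def by (rule the_equality) (use mn Lag_minimizer_unique[OF sc sp mn] in blast)+
  then show ?thesis unfolding gradplus_def dualgrad_def projD_eq by simp
qed

section \<open>Smoothness of the dual: the block Lipschitz estimate\<close>

definition Mblk :: "real^'n^'r \<Rightarrow> ('n \<Rightarrow> 'b) \<Rightarrow> ('r \<Rightarrow> 'j) \<Rightarrow> ('j \<Rightarrow> 'b \<Rightarrow> bool) \<Rightarrow> 'b
    \<Rightarrow> real^'n \<Rightarrow> real^'r" where
  "Mblk G blk rb E i = (\<lambda>x::real^'n. \<chi> r. if E (rb r) i
                 then (\<Sum>c\<in>{c. blk c = i}. G $ r $ c * x $ c) else 0)"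

lemma Ld_Mblk: "Ld G blk rb E \<sigma> i = (onorm (Mblk G blk rb E i))\<^sup>2 / \<sigma> i"
  unfolding Ld_def Mblk_def ..

lemma Mblk_bounded_linear: "bounded_linear (Mblk G blk rb E i :: real^'n::finite \<Rightarrow> real^'r::finite)"
proof -
  have "linear (Mblk G blk rb E i :: real^'n \<Rightarrow> real^'r)"
    by (rule linearI) (auto simp: Mblk_def vec_eq_iff sum.distrib sum_distrib_left algebra_simps)
  then show ?thesis using linear_conv_bounded_linear by blast
qed

lemma Mblk_blockproj: "Mblk G blk rb E i (blockproj blk i v) = Mblk G blk rb E i v"
  unfolding Mblk_def blockproj_def by (simp add: vec_eq_iff)

lemma Ld_nonneg: "\<sigma> i > 0 \<Longrightarrow> Ld G blk rb E \<sigma> i \<ge> 0"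
  unfolding Ld_def by simp

lemma Mblk_bound:
  fixes G :: "real^'n::finite^'r::finite"
  assumes sp: "\<sigma> i > 0"
  shows "(norm (Mblk G blk rb E i v))\<^sup>2 / Ld G blk rb E \<sigma> i
          \<le> \<sigma> i * (\<Sum>c\<in>UNIV. if blk c = i then (v$c)\<^sup>2 else 0)"
proof (cases "Ld G blk rb E \<sigma> i = 0")
  case True
  then show ?thesis using sp by (simp add: sum_nonneg)
next
  case False
  define on where "on = onorm (Mblk G blk rb E i)"
  have Ldp: "Ld G blk rb E \<sigma> i > 0" using False Ld_nonneg[where \<sigma>=\<sigma> and i=i, OF sp] by (simp add: less_le)
  have "norm (Mblk G blk rb E i v) \<le> on * norm (blockproj blk i v)"
    unfolding on_def Mblk_blockproj[symmetric, of G blk rb E i v]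
    by (rule onorm[OF Mblk_bounded_linear])
  then have "(norm (Mblk G blk rb E i v))\<^sup>2 \<le> (on * norm (blockproj blk i v))\<^sup>2"
    by (simp add: power_mono)
  also have "\<dots> = Ld G blk rb E \<sigma> i * \<sigma> i * (norm (blockproj blk i v))\<^sup>2"
    unfolding Ld_Mblk on_def[symmetric] using sp by (simp add: power_mult_distrib)
  finally show ?thesis using Ldp unfolding norm_blockproj_sq by (simp add: field_simps)
qed

lemma Mblk_zero:
  fixes G :: "real^'n::finite^'r::finite"
  assumes sp: "\<sigma> i > 0" and L0: "Ld G blk rb E \<sigma> i = 0"
  shows "Mblk G blk rb E i v = 0"
proof -
  have "onorm (Mblk G blk rb E i) = 0" using L0 sp unfolding Ld_Mblk by simp
  then show ?thesis by (subst (asm) onorm_eq_0[OF Mblk_bounded_linear]) simp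
qed

lemma Cauchy_Schwarz_weighted:
  fixes a L :: "'i \<Rightarrow> real"
  assumes "\<And>i. i \<in> N \<Longrightarrow> L i \<ge> 0" "\<And>i. i \<in> N \<Longrightarrow> L i = 0 \<Longrightarrow> a i = 0"
  shows "(\<Sum>i\<in>N. a i)\<^sup>2 \<le> (\<Sum>i\<in>N. L i) * (\<Sum>i\<in>N. (a i)\<^sup>2 / L i)"
proof -
  have "(\<Sum>i\<in>N. a i) = (\<Sum>i\<in>N. sqrt (L i) * (a i / sqrt (L i)))"
    "(\<Sum>i\<in>N. L i) = (\<Sum>i\<in>N. (sqrt (L i))\<^sup>2)"
    "(\<Sum>i\<in>N. (a i)\<^sup>2 / L i) = (\<Sum>i\<in>N. (a i / sqrt (L i))\<^sup>2)"
    by (use assms in \<open>auto intro!: sum.cong simp: power_divide\<close>)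
  then show ?thesis by (simp only: Cauchy_Schwarz_ineq_sum)
qed

text \<open>The key estimate |G v|^2_(W^-1) <= sum_i sigma_i |v_i|^2. Row r of G v is a
  sum over the blocks i with E (rb r) i of (M_i v)_r, and the weight of row r is
  the sum of the corresponding L_(d_i).\<close>
lemma Winvsq_G_le_sigma_sq:
  fixes G :: "real^'n::finite^'r::finite" and \<sigma> :: "'b::finite \<Rightarrow> real" and rb :: "'r \<Rightarrow> 'j"
  assumes sparse: "\<And>j i r c. \<not> E j i \<Longrightarrow> rb r = j \<Longrightarrow> blk c = i \<Longrightarrow> G $ r $ c = 0"
    and sp: "\<And>i. \<sigma> i > 0"
    and wpos: "\<And>r. Wdiag G blk rb E \<sigma> r > 0"
  shows "Winvsq (Wdiag G blk rb E \<sigma>) (G *v v) \<le> sigma_sq \<sigma> blk v"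
proof -
  define w where "w = Wdiag G blk rb E \<sigma>"
  define a where "a r i = (\<Sum>c\<in>{c. blk c = i}. G$r$c * v$c)" for r i
  define N where "N r = {i. E (rb r) i}" for r
  define L where "L = Ld G blk rb E \<sigma>"
  have Gv: "(G *v v)$r = (\<Sum>i\<in>N r. a r i)" for r
  proof -
    have "(G *v v)$r = (\<Sum>i\<in>UNIV. a r i)"
      unfolding a_def using sum.group[of UNIV UNIV blk "\<lambda>c. G$r$c * v$c"]
      by (simp add: matrix_vector_mult_def)
    also have "\<dots> = (\<Sum>i\<in>N r. a r i)"
      by (rule sum.mono_neutral_right) (auto simp: N_def a_def sparse)
    finally show ?thesis .
  qed
  have Mcomp: "Mblk G blk rb E i v $ r = (if E (rb r) i then a r i else 0)" for i r
    unfolding Mblk_def a_def by simp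
  have row: "((G *v v)$r)\<^sup>2 / w r \<le> (\<Sum>i\<in>N r. (a r i)\<^sup>2 / L i)" for r
  proof -
    have "(\<Sum>i\<in>N r. a r i)\<^sup>2 \<le> w r * (\<Sum>i\<in>N r. (a r i)\<^sup>2 / L i)"
      unfolding w_def Wdiag_def N_def[symmetric] L_def[symmetric]
    proof (rule Cauchy_Schwarz_weighted)
      fix i assume i: "i \<in> N r"
      show "L i \<ge> 0" unfolding L_def by (rule Ld_nonneg[where \<sigma>=\<sigma> and i=i, OF sp])
      assume "L i = 0"
      then have "Mblk G blk rb E i v = 0"
        using Mblk_zero[where \<sigma>=\<sigma> and i=i, OF sp] unfolding L_def by blast
      then have "Mblk G blk rb E i v $ r = 0" by simp
      then show "a r i = 0" using i unfolding Mcomp N_def by simp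
    qed
    moreover have "w r > 0" unfolding w_def by (rule wpos)
    ultimately show ?thesis unfolding Gv by (simp add: divide_le_eq mult.commute)
  qed
  have "Winvsq w (G *v v) \<le> (\<Sum>r\<in>UNIV. \<Sum>i\<in>N r. (a r i)\<^sup>2 / L i)"
    unfolding Winvsq_def by (rule sum_mono) (rule row)
  also have "\<dots> = (\<Sum>i\<in>UNIV. \<Sum>r\<in>UNIV. if E (rb r) i then (a r i)\<^sup>2 / L i else 0)"
    unfolding N_def by (subst sum.swap) (simp add: sum.inter_filter[symmetric])
  also have "\<dots> = (\<Sum>i\<in>UNIV. (norm (Mblk G blk rb E i v))\<^sup>2 / L i)"
    unfolding norm_sq_vec_sum Mcomp sum_divide_distrib
    by (rule sum.cong) (auto intro: sum.cong)
  also have "\<dots> \<le> (\<Sum>i\<in>UNIV. \<sigma> i * (\<Sum>c\<in>UNIV. if blk c = i then (v$c)\<^sup>2 else 0))"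
    unfolding L_def by (rule sum_mono) (rule Mblk_bound[where \<sigma>=\<sigma>, OF sp])
  also have "\<dots> = sigma_sq \<sigma> blk v" unfolding sigma_sq_def sum_over_blocks ..
  finally show ?thesis unfolding w_def .
qed

lemma projD_in: "projD isIneq x \<in> Dset isIneq"
  unfolding projD_def Dset_def by auto

text \<open>Since W is diagonal, the W-projection onto D is the coordinatewise
  Euclidean projection.\<close>
lemma projW_Dset:
  fixes x :: "real^'r::finite"
  assumes wp: "\<And>r. w r > 0"
  shows "projW w (Dset isIneq) x = projD isIneq x"
  unfolding projW_def
proof (rule some_equality)
  define p where "p = projD isIneq x"
  have coord_le: "((x - p)$r)\<^sup>2 \<le> ((x - y)$r)\<^sup>2" if "y \<in> Dset isIneq" for y r
  proof (cases "isIneq r \<and> x $ r < 0")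
    case True
    then have "((x - p)$r)\<^sup>2 = (x$r)\<^sup>2" "x $ r * y $ r \<le> 0"
      using that unfolding p_def projD_def Dset_def by (auto simp: mult_nonpos_nonneg)
    moreover have "((x - y)$r)\<^sup>2 = (x$r)\<^sup>2 - 2 * (x $ r * y $ r) + (y$r)\<^sup>2"
      by (simp add: power2_diff)
    ultimately show ?thesis using zero_le_power2[of "y $ r"] by linarith
  next
    case False
    then show ?thesis unfolding p_def projD_def by auto
  qed
  have term_le: "w r * ((x - p)$r)\<^sup>2 \<le> w r * ((x - y)$r)\<^sup>2" if "y \<in> Dset isIneq" for y r
    using coord_le[OF that] wp[of r] by (simp add: mult_left_mono)
  show "p \<in> Dset isIneq \<and> (\<forall>y'\<in>Dset isIneq. Wnorm w (x - p) \<le> Wnorm w (x - y'))"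
    unfolding Wnorm_def p_def[symmetric]
    using projD_in p_def term_le by (blast intro: real_sqrt_le_mono sum_mono)
  fix y assume y: "y \<in> Dset isIneq \<and> (\<forall>y'\<in>Dset isIneq. Wnorm w (x - y) \<le> Wnorm w (x - y'))"
  then have "(\<Sum>r\<in>UNIV. w r * ((x - y)$r)\<^sup>2) \<le> (\<Sum>r\<in>UNIV. w r * ((x - p)$r)\<^sup>2)"
    using projD_in p_def unfolding Wnorm_def by auto
  then have "\<forall>r\<in>UNIV. w r * ((x - y)$r)\<^sup>2 - w r * ((x - p)$r)\<^sup>2 = 0"
    using term_le y sum_mono[of UNIV "\<lambda>r. w r * ((x - p)$r)\<^sup>2" "\<lambda>r. w r * ((x - y)$r)\<^sup>2"]
    by (subst sum_nonneg_eq_0_iff[symmetric]) (auto simp: sum_subtractf)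
  then have eq: "((x - y)$r)\<^sup>2 = ((x - p)$r)\<^sup>2" for r using wp[of r] by (metis less_irrefl mult_cancel_left right_minus_eq UNIV_I)
  show "y = p"
    unfolding vec_eq_iff
  proof
    fix r
    have y0: "isIneq r \<Longrightarrow> y $ r \<ge> 0" using y unfolding Dset_def by auto
    from eq[of r] have "x$r - y$r = x$r - p$r \<or> x$r - y$r = - (x$r - p$r)"
      by (simp add: power2_eq_iff)
    then show "y $ r = p $ r" using y0 unfolding p_def projD_def by (auto split: if_splits)
  qed
qed

lemma projD_variational:
  fixes a u \<mu> :: "real^'r::finite"
  assumes wp: "\<And>r. w r > 0" and mu: "\<mu> \<in> Dset isIneq"
    and b: "b = projD isIneq (a + Winv w u)"
  shows "(\<Sum>r\<in>UNIV. (u $ r - w r * (b $ r - a $ r)) * (\<mu> $ r - b $ r)) \<le> 0"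
proof (rule sum_nonpos)
  fix r
  have wr: "w r > 0" by (rule wp)
  show "(u $ r - w r * (b $ r - a $ r)) * (\<mu> $ r - b $ r) \<le> 0"
  proof (cases "isIneq r \<and> a $ r + u $ r / w r < 0")
    case True
    then have "u $ r < - w r * a $ r" "b $ r = 0" "\<mu> $ r \<ge> 0"
      using wr mu unfolding b projD_def Winv_def Dset_def by (auto simp: field_simps)
    then show ?thesis by (simp add: mult_nonpos_nonneg)
  next
    case False
    then show ?thesis using wr unfolding b projD_def Winv_def by auto
  qed
qed

lemma projD_residual_le_step:
  fixes a u :: "real^'r::finite"
  assumes wp: "\<And>r. w r > 0" and aD: "a \<in> Dset isIneq"
    and b: "b = projD isIneq (a + Winv w u)"
  shows "Winvsq w (projD isIneq u) \<le> Wsq w (b - a)"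
  unfolding Winvsq_def Wsq_def
proof (rule sum_mono)
  fix r
  have wr: "w r > 0" by (rule wp)
  show "(projD isIneq u $ r)\<^sup>2 / w r \<le> w r * ((b - a) $ r)\<^sup>2"
  proof (cases "isIneq r \<and> u $ r \<le> 0")
    case True
    then show ?thesis using wr unfolding projD_def by simp
  next
    case False
    moreover have "isIneq r \<Longrightarrow> a $ r \<ge> 0" using aD unfolding Dset_def by auto
    ultimately have "(b - a) $ r = u $ r / w r" "projD isIneq u $ r = u $ r"
      using wr unfolding b projD_def Winv_def by auto
    then show ?thesis using wr by (simp add: power_divide power2_eq_square)
  qed
qed

lemma weighted_young:
  fixes D v :: "real^'r::finite"
  assumes wp: "\<And>r. w r > 0"
  shows "0 \<le> Wsq w D + 2 * (\<Sum>r\<in>UNIV. D $ r * v $ r) + Winvsq w v"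
proof -
  have "Wsq w D + 2 * (\<Sum>r\<in>UNIV. D $ r * v $ r) + Winvsq w v
      = (\<Sum>r\<in>UNIV. (w r * D $ r + v $ r)\<^sup>2 / w r)"
    unfolding Wsq_def Winvsq_def sum_distrib_left sum.distrib[symmetric]
  proof (rule sum.cong[OF refl])
    fix r
    have "w r \<noteq> 0" using wp[of r] by simp
    then show "w r * (D $ r)\<^sup>2 + 2 * (D $ r * v $ r) + (v $ r)\<^sup>2 / w r = (w r * D $ r + v $ r)\<^sup>2 / w r"
      by (simp add: field_simps power2_eq_square)
  qed
  also have "0 \<le> (\<Sum>r\<in>UNIV. (w r * D $ r + v $ r)\<^sup>2 / w r)"
    by (intro sum_nonneg) (simp add: less_imp_le wp)
  finally show ?thesis by simp
qed

text \<open>The change of Lagrangian minimiser is controlled by quadratic growth and the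
  block Lipschitz estimate.\<close>
lemma dualfun_smooth:
  fixes f :: "'b::finite \<Rightarrow> real^'n::finite \<Rightarrow> real" and G :: "real^'n^'r::finite"
    and rb :: "'r \<Rightarrow> 'j"
  assumes sc: "\<And>i. block_strongly_convex blk i (\<sigma> i) (f i)" and sp: "\<And>i. \<sigma> i > 0"
    and sparse: "\<And>j i r c. \<not> E j i \<Longrightarrow> rb r = j \<Longrightarrow> blk c = i \<Longrightarrow> G $ r $ c = 0"
    and wdef: "w = Wdiag G blk rb E \<sigma>"
    and wp: "\<And>r. w r > 0"
    and za: "\<And>z'. Lag f G g za a \<le> Lag f G g z' a"
    and zb: "\<And>z'. Lag f G g zb b \<le> Lag f G g z' b"
  shows "dualfun f G g b \<ge> dualfun f G g a + (\<Sum>r\<in>UNIV. (b$r - a$r) * (G *v za - g)$r)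
           - Wsq w (b - a) / 2"
proof -
  define v where "v = G *v (zb - za)"
  have growth: "Lag f G g zb a \<ge> Lag f G g za a + sigma_sq \<sigma> blk (zb - za) / 2"
    by (rule Lag_quadratic_growth[OF sc sp za])
  have lip: "Winvsq w v \<le> sigma_sq \<sigma> blk (zb - za)"
    unfolding v_def wdef by (rule Winvsq_G_le_sigma_sq[OF sparse sp wp[unfolded wdef]])
  have "(\<Sum>r\<in>UNIV. (b$r - a$r) * ((G *v zb)$r - g$r))
      = (\<Sum>r\<in>UNIV. (b$r - a$r) * (G *v za - g)$r) + (\<Sum>r\<in>UNIV. (b - a) $ r * v $ r)"
    unfolding sum.distrib[symmetric] v_def
    by (rule sum.cong) (simp_all add: matrix_vector_mult_diff_distrib algebra_simps)
  then have "Lag f G g zb b = Lag f G g zb a + (\<Sum>r\<in>UNIV. (b$r - a$r) * (G *v za - g)$r)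
      + (\<Sum>r\<in>UNIV. (b - a) $ r * v $ r)"
    using Lag_shift_multiplier[of f G g zb b a] by simp
  then show ?thesis
    unfolding dualfun_eq_Lag_min[OF za] dualfun_eq_Lag_min[OF zb]
    using growth lip weighted_young[of w "b - a" v, OF wp] by linarith
qed

text \<open>The one-step inequality: for a in D, b = [a + W^-1 grad d(a)]_D and mu in D,
  d(mu) - d(b) <= <b - a, mu - a>_W - |b - a|^2_W / 2.
  It combines concavity of d at a, smoothness of d, and the projection inequality.\<close>
lemma dual_ascent_step:
  fixes f :: "'b::finite \<Rightarrow> real^'n::finite \<Rightarrow> real" and G :: "real^'n^'r::finite"
    and rb :: "'r \<Rightarrow> 'j"
  assumes sc: "\<And>i. block_strongly_convex blk i (\<sigma> i) (f i)" and sp: "\<And>i. \<sigma> i > 0"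
    and sparse: "\<And>j i r c. \<not> E j i \<Longrightarrow> rb r = j \<Longrightarrow> blk c = i \<Longrightarrow> G $ r $ c = 0"
    and wdef: "w = Wdiag G blk rb E \<sigma>"
    and wp: "\<And>r. w r > 0"
    and za: "\<And>z'. Lag f G g za a \<le> Lag f G g z' a"
    and zb: "\<And>z'. Lag f G g zb b \<le> Lag f G g z' b"
    and b: "b = projD isIneq (a + Winv w (G *v za - g))"
    and mu: "\<mu> \<in> Dset isIneq"
  shows "dualfun f G g \<mu> - dualfun f G g b \<le> Winner w (b - a) (\<mu> - a) - Wsq w (b - a) / 2"
proof -
  define u where "u = G *v za - g"
  have concave: "dualfun f G g \<mu> \<le> dualfun f G g a + (\<Sum>r\<in>UNIV. (\<mu>$r - a$r) * u$r)"
    using dualfun_le_Lag[OF sc sp, of G g \<mu> za]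
    unfolding dualfun_eq_Lag_min[OF za] Lag_shift_multiplier[of f G g za \<mu> a] u_def by simp
  have smooth: "dualfun f G g b \<ge> dualfun f G g a + (\<Sum>r\<in>UNIV. (b$r - a$r) * u$r) - Wsq w (b - a) / 2"
    unfolding u_def by (rule dualfun_smooth[OF sc sp sparse wdef wp za zb])
  have proj: "(\<Sum>r\<in>UNIV. (u $ r - w r * (b $ r - a $ r)) * (\<mu> $ r - b $ r)) \<le> 0"
    by (rule projD_variational[OF wp mu b[folded u_def]])
  have "(\<Sum>r\<in>UNIV. (\<mu>$r - a$r) * u$r) - (\<Sum>r\<in>UNIV. (b$r - a$r) * u$r) + Wsq w (b - a)
        - Winner w (b - a) (\<mu> - a)
       = (\<Sum>r\<in>UNIV. (u $ r - w r * (b $ r - a $ r)) * (\<mu> $ r - b $ r))"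
    unfolding Wsq_def Winner_def sum_subtractf[symmetric] sum.distrib[symmetric]
    by (rule sum.cong) (simp_all add: power2_eq_square algebra_simps)
  then show ?thesis using concave smooth proj by linarith
qed

section \<open>Existence and compactness of dual solutions\<close>

lemma Dset_closed: "closed (Dset isIneq :: (real^'r::finite) set)"
proof -
  have "Dset isIneq = (\<Inter>r\<in>{r. isIneq r}. {x::real^'r. 0 \<le> x $ r})" unfolding Dset_def by auto
  moreover have "closed {x::real^'r. 0 \<le> x $ r}" for r
    by (rule closed_Collect_le) (auto intro: continuous_intros)
  ultimately show ?thesis by auto
qed

lemma eq_rows_surjective:
  fixes G :: "real^'n::finite^'r::finite"
  assumes rank: "\<And>c. (\<Sum>r\<in>{r. \<not> isIneq r}. c r *\<^sub>R row r G) = 0 \<Longrightarrow> \<forall>r. \<not> isIneq r \<longrightarrow> c r = 0"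
    and r0: "\<not> isIneq r0"
  shows "\<exists>\<delta>. \<forall>r. \<not> isIneq r \<longrightarrow> (G *v \<delta>)$r = (if r = r0 then 1 else 0)"
proof (rule ccontr)
  assume nex: "\<not> ?thesis"
  define M where "M z = (\<chi> r. if isIneq r then 0 else (G *v z)$r)" for z
  define e where "e = (\<chi> r. if r = r0 then 1 else (0::real))"
  have "linear M"
    by (rule linearI) (auto simp: M_def vec_eq_iff matrix_vector_right_distrib matrix_vector_mult_scaleR)
  then have spanM: "span (range M) = range M"
    using linear_subspace_image[OF _ subspace_UNIV] by simp
  have eM: "e \<notin> range M"
    using nex by (auto simp: vec_eq_iff M_def e_def)
  obtain y z where y: "y \<in> span (range M)" and orth: "\<And>w. w \<in> span (range M) \<Longrightarrow> orthogonal z w"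
    and ez: "e = y + z"
    using orthogonal_subspace_decomp_exists by blast
  obtain yz where yz: "y = M yz" using y spanM by auto
  have zi: "z $ r = 0" if "isIneq r" for r
  proof -
    have "e $ r = 0" "y $ r = 0" using that r0 unfolding e_def yz M_def by auto
    then show ?thesis using ez by (simp add: vec_eq_iff)
  qed
  define v where "v = (\<Sum>r\<in>{r. \<not> isIneq r}. (z$r) *\<^sub>R row r G)"
  have iv: "inner v x = inner z (M x)" for x
  proof -
    have "inner (row r G) x = (G *v x) $ r" for r
      by (simp add: row_def inner_vec_sum matrix_vector_mult_def)
    then have "inner v x = (\<Sum>r\<in>{r. \<not> isIneq r}. z$r * (G *v x)$r)"
      unfolding v_def by (simp add: inner_sum_left)
    also have "\<dots> = (\<Sum>r\<in>UNIV. if \<not> isIneq r then z$r * (G *v x)$r else 0)"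
      by (simp add: sum.inter_filter[symmetric])
    also have "\<dots> = inner z (M x)"
      unfolding inner_vec_sum M_def by (rule sum.cong) auto
    finally show ?thesis .
  qed
  have "inner v v = 0" unfolding iv using orth[of "M v"] spanM by (auto simp: orthogonal_def)
  then have "\<forall>r. \<not> isIneq r \<longrightarrow> z$r = 0" using rank[of "\<lambda>r. z$r"] unfolding v_def by simp
  then have "z = 0" using zi by (auto simp: vec_eq_iff)
  then show False using eM ez yz by simp
qed

text \<open>Bounds on multipliers with d(lm) >= c0, from testing the Lagrangian at
  a Slater point zt (inequality rows) and at zt -+ delta (equality rows).\<close>
lemma ineq_multiplier_bound:
  fixes f :: "'b::finite \<Rightarrow> real^'n::finite \<Rightarrow> real" and G :: "real^'n^'r::finite"
  assumes sc: "\<And>i. block_strongly_convex blk i (\<sigma> i) (f i)" and sp: "\<And>i. \<sigma> i > 0"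
    and lD: "lm \<in> Dset isIneq" and c0: "c0 \<le> dualfun f G g lm"
    and zt: "\<forall>r. (\<not> isIneq r \<longrightarrow> (G *v zt) $ r = g $ r) \<and> (isIneq r \<longrightarrow> (G *v zt) $ r < g $ r)"
    and r: "isIneq r"
  shows "lm$r * (g$r - (G *v zt)$r) \<le> (\<Sum>i\<in>UNIV. f i zt) - c0"
proof -
  define t where "t r' = lm$r' * ((G *v zt)$r' - g$r')" for r'
  have tn: "t r' \<le> 0" for r'
  proof (cases "isIneq r'")
    case True
    have "lm$r' \<ge> 0" using lD True unfolding Dset_def by auto
    moreover have "(G *v zt)$r' - g$r' \<le> 0" using zt True by (simp add: less_imp_le)
    ultimately show ?thesis unfolding t_def by (rule mult_nonneg_nonpos)
  next
    case False then show ?thesis using zt unfolding t_def by simp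
  qed
  have "(\<Sum>r'\<in>UNIV. t r') \<le> t r"
    using tn by (simp add: sum.remove[of UNIV r] sum_nonpos)
  moreover have "c0 \<le> (\<Sum>i\<in>UNIV. f i zt) + (\<Sum>r'\<in>UNIV. t r')"
    using c0 dualfun_le_Lag[OF sc sp, of G g lm zt] unfolding Lag_sum t_def by simp
  ultimately show ?thesis unfolding t_def by (simp add: algebra_simps)
qed

lemma eq_multiplier_bound:
  fixes f :: "'b::finite \<Rightarrow> real^'n::finite \<Rightarrow> real" and G :: "real^'n^'r::finite"
  assumes sc: "\<And>i. block_strongly_convex blk i (\<sigma> i) (f i)" and sp: "\<And>i. \<sigma> i > 0"
    and lD: "lm \<in> Dset isIneq" and c0: "c0 \<le> dualfun f G g lm"
    and zt: "\<forall>r. (\<not> isIneq r \<longrightarrow> (G *v zt) $ r = g $ r) \<and> (isIneq r \<longrightarrow> (G *v zt) $ r < g $ r)"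
    and r0: "\<not> isIneq r0"
    and dl: "\<forall>r. \<not> isIneq r \<longrightarrow> (G *v \<delta>)$r = (if r = r0 then 1 else 0)"
    and ub: "\<And>r. isIneq r \<Longrightarrow> lm$r \<le> u r"
    and sg: "\<bar>sg\<bar> \<le> 1"
  shows "sg * lm$r0 \<le> (\<Sum>i\<in>UNIV. f i (zt - sg *\<^sub>R \<delta>))
           + (\<Sum>r\<in>UNIV. if isIneq r then u r * \<bar>(G *v \<delta>)$r\<bar> else 0) - c0"
proof -
  define zs where "zs = zt - sg *\<^sub>R \<delta>"
  have Gzs: "(G *v zs)$r = (G *v zt)$r - sg * (G *v \<delta>)$r" for r
    unfolding zs_def by (simp add: matrix_vector_mult_diff_distrib matrix_vector_mult_scaleR)
  define T where "T r = (if r = r0 then - sg * lm$r0 else 0)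
      + (if isIneq r then u r * \<bar>(G *v \<delta>)$r\<bar> else 0)" for r
  have tb: "lm$r * ((G *v zs)$r - g$r) \<le> T r" for r
  proof (cases "isIneq r")
    case True
    have l0: "lm$r \<ge> 0" using lD True unfolding Dset_def by auto
    have "- sg * (G *v \<delta>)$r \<le> \<bar>sg * (G *v \<delta>)$r\<bar>" by linarith
    also have "\<dots> \<le> \<bar>(G *v \<delta>)$r\<bar>" using sg by (simp add: abs_mult mult_left_le_one_le)
    finally have "- sg * (G *v \<delta>)$r \<le> \<bar>(G *v \<delta>)$r\<bar>" .
    moreover have "(G *v zt)$r < g$r" using zt True by blast
    ultimately have "(G *v zs)$r - g$r \<le> \<bar>(G *v \<delta>)$r\<bar>"
      unfolding Gzs by linarith
    then have "lm$r * ((G *v zs)$r - g$r) \<le> lm$r * \<bar>(G *v \<delta>)$r\<bar>" using l0 by (simp add: mult_left_mono)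
    also have "\<dots> \<le> u r * \<bar>(G *v \<delta>)$r\<bar>" using ub[OF True] by (simp add: mult_right_mono)
    finally show ?thesis unfolding T_def using True r0 by auto
  next
    case False
    then show ?thesis using zt dl unfolding T_def Gzs by auto
  qed
  have "c0 \<le> Lag f G g zs lm" using c0 dualfun_le_Lag[OF sc sp] order_trans by blast
  also have "\<dots> \<le> (\<Sum>i\<in>UNIV. f i zs) + (\<Sum>r\<in>UNIV. T r)"
    unfolding Lag_sum using tb by (simp add: sum_mono)
  finally show ?thesis unfolding T_def zs_def sum.distrib by simp
qed

text \<open>Under Slater's condition and full row rank of A every superlevel set
  {lm in D. d(lm) >= c0} of the dual function is bounded: each coordinate of lm
  is bounded by testing the Lagrangian at a Slater point.\<close>
lemma dual_superlevel_bounded: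
  fixes f :: "'b::finite \<Rightarrow> real^'n::finite \<Rightarrow> real" and G :: "real^'n^'r::finite"
  assumes sc: "\<And>i. block_strongly_convex blk i (\<sigma> i) (f i)" and sp: "\<And>i. \<sigma> i > 0"
    and rank: "\<And>c. (\<Sum>r\<in>{r. \<not> isIneq r}. c r *\<^sub>R row r G) = 0 \<Longrightarrow> \<forall>r. \<not> isIneq r \<longrightarrow> c r = 0"
    and slater: "\<exists>zt. \<forall>r. (\<not> isIneq r \<longrightarrow> (G *v zt) $ r = g $ r) \<and> (isIneq r \<longrightarrow> (G *v zt) $ r < g $ r)"
  shows "bounded (Dset isIneq \<inter> {lm. c0 \<le> dualfun f G g lm})"
proof -
  define K where "K = Dset isIneq \<inter> {lm. c0 \<le> dualfun f G g lm}"
  obtain zt where zt: "\<forall>r. (\<not> isIneq r \<longrightarrow> (G *v zt) $ r = g $ r) \<and> (isIneq r \<longrightarrow> (G *v zt) $ r < g $ r)"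
    using slater by blast
  define u where "u r = ((\<Sum>i\<in>UNIV. f i zt) - c0) / (g$r - (G *v zt)$r)" for r
  have ub: "lm$r \<le> u r" if "lm \<in> K" "isIneq r" for lm r
  proof -
    have "lm$r * (g$r - (G *v zt)$r) \<le> (\<Sum>i\<in>UNIV. f i zt) - c0"
      by (rule ineq_multiplier_bound[OF sc sp _ _ zt \<open>isIneq r\<close>]) (use that in \<open>auto simp: K_def\<close>)
    moreover have "g$r - (G *v zt)$r > 0" using zt that by auto
    ultimately show ?thesis unfolding u_def by (simp add: pos_le_divide_eq)
  qed
  have "\<forall>r0. \<exists>\<delta>. \<not> isIneq r0 \<longrightarrow> (\<forall>r. \<not> isIneq r \<longrightarrow> (G *v \<delta>)$r = (if r = r0 then 1 else 0))"
    using eq_rows_surjective[OF rank] by blast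
  then obtain dl where dl: "\<And>r0. \<not> isIneq r0 \<Longrightarrow> \<forall>r. \<not> isIneq r \<longrightarrow> (G *v dl r0)$r = (if r = r0 then 1 else 0)"
    by metis
  define C where "C r0 = (\<Sum>r\<in>UNIV. if isIneq r then u r * \<bar>(G *v dl r0)$r\<bar> else 0)" for r0
  define bnd where "bnd r = (if isIneq r then \<bar>u r\<bar> else
      \<bar>(\<Sum>i\<in>UNIV. f i (zt - 1 *\<^sub>R dl r)) + C r - c0\<bar> + \<bar>(\<Sum>i\<in>UNIV. f i (zt - (-1) *\<^sub>R dl r)) + C r - c0\<bar>)" for r
  have coord_bound: "\<bar>lm$r\<bar> \<le> bnd r" if lK: "lm \<in> K" for lm r
  proof (cases "isIneq r")
    case True
    then have "0 \<le> lm$r" using lK unfolding K_def Dset_def by auto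
    then show ?thesis using ub[OF lK True] True unfolding bnd_def by simp
  next
    case False
    have lD: "lm \<in> Dset isIneq" and c: "c0 \<le> dualfun f G g lm" using lK unfolding K_def by auto
    have one: "\<bar>1::real\<bar> \<le> 1" and minus_one: "\<bar>-1::real\<bar> \<le> 1" by simp_all
    have "1 * lm$r \<le> (\<Sum>i\<in>UNIV. f i (zt - 1 *\<^sub>R dl r)) + C r - c0"
      unfolding C_def by (rule eq_multiplier_bound[OF sc sp lD c zt False dl[OF False] ub[OF lK] one])
    moreover have "(-1) * lm$r \<le> (\<Sum>i\<in>UNIV. f i (zt - (-1) *\<^sub>R dl r)) + C r - c0"
      unfolding C_def by (rule eq_multiplier_bound[OF sc sp lD c zt False dl[OF False] ub[OF lK] minus_one])
    ultimately have "\<bar>lm$r\<bar> \<le> \<bar>(\<Sum>i\<in>UNIV. f i (zt - 1 *\<^sub>R dl r)) + C r - c0\<bar>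
        + \<bar>(\<Sum>i\<in>UNIV. f i (zt - (-1) *\<^sub>R dl r)) + C r - c0\<bar>"
      by arith
    then show ?thesis using False unfolding bnd_def by simp
  qed
  show ?thesis
    unfolding bounded_iff K_def[symmetric]
  proof (intro exI ballI)
    fix lm assume "lm \<in> K"
    have "norm lm \<le> (\<Sum>r\<in>UNIV. \<bar>lm$r\<bar>)" by (rule norm_le_l1_cart)
    also have "\<dots> \<le> (\<Sum>r\<in>UNIV. bnd r)" by (rule sum_mono) (rule coord_bound[OF \<open>lm \<in> K\<close>])
    finally show "norm lm \<le> (\<Sum>r\<in>UNIV. bnd r)" .
  qed
qed

text \<open>Hence the dual optimal set is nonempty and compact: the continuous dual
  function attains its maximum on the compact superlevel set of a point l0 in D.\<close>
lemma dualopt_nonempty_compact: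
  fixes f :: "'b::finite \<Rightarrow> real^'n::finite \<Rightarrow> real" and G :: "real^'n^'r::finite"
  assumes sc: "\<And>i. block_strongly_convex blk i (\<sigma> i) (f i)" and sp: "\<And>i. \<sigma> i > 0"
    and rank: "\<And>c. (\<Sum>r\<in>{r. \<not> isIneq r}. c r *\<^sub>R row r G) = 0 \<Longrightarrow> \<forall>r. \<not> isIneq r \<longrightarrow> c r = 0"
    and slater: "\<exists>zt. \<forall>r. (\<not> isIneq r \<longrightarrow> (G *v zt) $ r = g $ r) \<and> (isIneq r \<longrightarrow> (G *v zt) $ r < g $ r)"
    and l0: "l0 \<in> Dset isIneq"
  shows "dualopt f G g isIneq \<noteq> {}" "compact (dualopt f G g isIneq)"
proof -
  define d where "d = dualfun f G g"
  have dc: "continuous_on UNIV d" unfolding d_def by (rule dualfun_continuous[OF sc sp])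
  define K where "K = Dset isIneq \<inter> {lm. d l0 \<le> d lm}"
  have bK: "bounded K" unfolding K_def d_def by (rule dual_superlevel_bounded[OF sc sp rank slater])
  have "closed K" unfolding K_def
    by (intro closed_Int Dset_closed closed_Collect_le dc continuous_on_const)
  with bK have compK: "compact K" by (simp add: compact_eq_bounded_closed)
  have "l0 \<in> K" using l0 unfolding K_def by simp
  then obtain ls where ls: "ls \<in> K" "\<And>y. y \<in> K \<Longrightarrow> d y \<le> d ls"
    using continuous_attains_sup[OF compK _ continuous_on_subset[OF dc]] by blast
  have ls_max: "d \<mu> \<le> d ls" if "\<mu> \<in> Dset isIneq" for \<mu>
  proof (cases "\<mu> \<in> K")
    case False
    then have "d \<mu> < d l0" using that unfolding K_def by auto
    also have "d l0 \<le> d ls" using ls(1) unfolding K_def by auto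
    finally show ?thesis by simp
  qed (use ls in blast)
  have opt: "dualopt f G g isIneq = Dset isIneq \<inter> {lm. d ls \<le> d lm}"
    unfolding dualopt_def d_def[symmetric] using ls_max ls(1) unfolding K_def
    by (auto intro: order_trans)
  show "dualopt f G g isIneq \<noteq> {}" unfolding opt using ls(1) unfolding K_def by auto
  have "closed (dualopt f G g isIneq)" unfolding opt
    by (intro closed_Int Dset_closed closed_Collect_le dc continuous_on_const)
  moreover have "dualopt f G g isIneq \<subseteq> K" unfolding opt K_def using ls(1) unfolding K_def by auto
  ultimately show "compact (dualopt f G g isIneq)"
    using bK by (auto simp: compact_eq_bounded_closed intro: bounded_subset)
qed

section \<open>Linear rate for real sequences\<close>

lemma gap_geometric:
  fixes e W :: "nat \<Rightarrow> real" and \<kappa> :: real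
  assumes kp: "\<kappa> > 0"
    and ascent: "\<And>k. W k \<le> 2 * (e k - e (Suc k))"
    and error_bound: "\<And>k. e (Suc k) \<le> \<kappa> * W k"
  shows "e (Suc i) \<le> (2 * \<kappa> / (1 + 2 * \<kappa>)) ^ i * e 1"
proof -
  define q where "q = 2 * \<kappa> / (1 + 2 * \<kappa>)"
  have q: "0 \<le> q" unfolding q_def using kp by simp
  have contraction: "e (Suc (Suc i)) \<le> q * e (Suc i)" for i
  proof -
    have "e (Suc (Suc i)) \<le> \<kappa> * (2 * (e (Suc i) - e (Suc (Suc i))))"
      using error_bound[of "Suc i"] ascent[of "Suc i"] kp by (smt (verit) mult_left_mono)
    then have "(1 + 2 * \<kappa>) * e (Suc (Suc i)) \<le> 2 * \<kappa> * e (Suc i)"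
      by (simp add: algebra_simps)
    then show ?thesis unfolding q_def using kp by (simp add: field_simps)
  qed
  have "e (Suc i) \<le> q ^ i * e 1"
  proof (induction i)
    case (Suc i)
    have "e (Suc (Suc i)) \<le> q * e (Suc i)" by (rule contraction)
    also have "\<dots> \<le> q * (q ^ i * e 1)" by (rule mult_left_mono[OF Suc q])
    finally show ?case by simp
  qed simp
  then show ?thesis unfolding q_def .
qed

lemma linear_rate:
  fixes e W :: "nat \<Rightarrow> real" and \<kappa> R :: real and k :: nat
  assumes e_nonneg: "\<And>k. 0 \<le> e k" and W_nonneg: "\<And>k. 0 \<le> W k"
    and ascent: "\<And>k. W k \<le> 2 * (e k - e (Suc k))"
    and error_bound: "\<And>k. e (Suc k) \<le> \<kappa> * W k"
    and start: "2 * e 1 \<le> R\<^sup>2" and R: "0 \<le> R" and k: "1 \<le> k"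
  shows "sqrt (W k) \<le> (4 * (1 + \<kappa>) / (1 + 4 * (1 + \<kappa>))) powr ((real k - 2) / 2) * R"
proof -
  define \<rho> where "\<rho> = 4 * (1 + \<kappa>) / (1 + 4 * (1 + \<kappa>))"
  define P where "P = \<rho> powr ((real k - 2) / 2)"
  obtain j where kj: "k = Suc j" using k by (cases k) auto
  have "W k \<le> (P * R)\<^sup>2"
  proof (cases "\<kappa> > 0")
    case True
    define q where "q = 2 * \<kappa> / (1 + 2 * \<kappa>)"
    have q: "0 \<le> q" "q \<le> \<rho>" and \<rho>: "0 < \<rho>" "\<rho> \<le> 1"
      unfolding q_def \<rho>_def using True by (simp_all add: field_simps)
    have "\<rho> ^ j = \<rho> powr (real j)" using \<rho> by (simp add: powr_realpow)
    also have "\<dots> \<le> \<rho> powr (real k - 2)" by (rule powr_mono') (use \<rho> kj in auto)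
    also have "\<dots> = P\<^sup>2" unfolding P_def power2_eq_square by (simp add: powr_add[symmetric])
    finally have pw: "\<rho> ^ j \<le> P\<^sup>2" .
    have "W k \<le> 2 * e k" using ascent[of k] e_nonneg[of "Suc k"] by simp
    also have "\<dots> \<le> q ^ j * (2 * e 1)"
      unfolding kj q_def using gap_geometric[where e=e and W=W and \<kappa>=\<kappa> and i=j, OF True ascent error_bound] by simp
    also have "\<dots> \<le> \<rho> ^ j * R\<^sup>2"
      by (intro mult_mono power_mono start q) (use e_nonneg \<rho> in auto)
    also have "\<dots> \<le> P\<^sup>2 * R\<^sup>2" by (rule mult_right_mono[OF pw]) simp
    finally show ?thesis by (simp add: power_mult_distrib)
  next
    case False
    then have "\<kappa> * W j \<le> 0" using W_nonneg[of j] by (simp add: mult_nonpos_nonneg)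
    then have "e k \<le> 0" using error_bound[of j] unfolding kj by linarith
    then have "W k \<le> 0" using ascent[of k] e_nonneg[of "Suc k"] by simp
    also have "0 \<le> (P * R)\<^sup>2" by simp
    finally show ?thesis .
  qed
  then have "sqrt (W k) \<le> \<bar>P * R\<bar>" using real_sqrt_le_mono by fastforce
  then show ?thesis unfolding P_def \<rho>_def using R by simp
qed

section \<open>Abstract projected ascent\<close>

locale weighted_projected_ascent =
  fixes w :: "'r::finite \<Rightarrow> real" and d :: "real^'r \<Rightarrow> real" and D :: "(real^'r) set"
    and lam :: "nat \<Rightarrow> real^'r"
  assumes w_pos: "\<And>r. w r > 0"
    and lam_in: "\<And>k. lam k \<in> D"
    and ascent_step: "\<And>\<mu> k. \<mu> \<in> D \<Longrightarrow> d \<mu> - d (lam (Suc k))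
        \<le> Winner w (lam (Suc k) - lam k) (\<mu> - lam k) - Wsq w (lam (Suc k) - lam k) / 2"
begin

lemma sufficient_ascent: "Wsq w (lam (Suc k) - lam k) \<le> 2 * (d (lam (Suc k)) - d (lam k))"
  using ascent_step[OF lam_in[of k], of k] by (simp add: Winner_zero)

lemma fejer:
  assumes s: "s \<in> D" "\<And>\<mu>. \<mu> \<in> D \<Longrightarrow> d \<mu> \<le> d s"
  shows "Wnorm w (lam k - s) \<le> Wnorm w (lam 0 - s)"
proof (induction k)
  case (Suc k)
  define \<Delta> where "\<Delta> = lam (Suc k) - lam k"
  have "0 \<le> Winner w \<Delta> (s - lam k) - Wsq w \<Delta> / 2"
    using ascent_step[OF s(1), of k] s(2)[OF lam_in[of "Suc k"]] unfolding \<Delta>_def by linarith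
  moreover have "Wsq w (lam (Suc k) - s) = Wsq w (\<Delta> - (s - lam k))"
    by (rule arg_cong[where f="Wsq w"]) (simp add: \<Delta>_def)
  then have "Wsq w (lam (Suc k) - s) = Wsq w \<Delta> - 2 * Winner w \<Delta> (s - lam k) + Wsq w (lam k - s)"
    using Wsq_diff[of w \<Delta> "s - lam k"] Wsq_minus_commute[of w s "lam k"] by linarith
  ultimately have "Wnorm w (lam (Suc k) - s) \<le> Wnorm w (lam k - s)"
    unfolding Wnorm_Wsq by (intro real_sqrt_le_mono) linarith
  then show ?case using Suc by simp
qed simp

text \<open>Consequently the iterates stay in the region where the error bound is
  assumed: their farthest distance to a compact set of maximisers never
  exceeds that of lam 0.\<close>
lemma Tdist_le_initial:
  assumes S: "compact S" "S \<noteq> {}" "S \<subseteq> D" and max: "\<And>s \<mu>. s \<in> S \<Longrightarrow> \<mu> \<in> D \<Longrightarrow> d \<mu> \<le> d s"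
  shows "Tdist w S (lam k) \<le> Tdist w S (lam 0)"
  unfolding Tdist_def
proof (rule cSUP_mono)
  have "compact ((\<lambda>s. Wnorm w (lam 0 - s)) ` S)"
    by (rule compact_continuous_image) (use S in \<open>auto simp: Wnorm_def intro!: continuous_intros\<close>)
  then show "bdd_above ((\<lambda>s. Wnorm w (lam 0 - s)) ` S)"
    by (intro bounded_imp_bdd_above compact_imp_bounded)
  show "\<exists>m\<in>S. Wnorm w (lam k - s) \<le> Wnorm w (lam 0 - m)" if "s \<in> S" for s
    using that fejer[of s] S(3) max by blast
qed (use S in auto)

lemma first_gap:
  assumes s: "s \<in> D"
  shows "d s - d (lam 1) \<le> Wsq w (s - lam 0) / 2"
proof -
  define \<Delta> where "\<Delta> = lam 1 - lam 0"
  have "d s - d (lam 1) \<le> Winner w \<Delta> (s - lam 0) - Wsq w \<Delta> / 2"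
    using ascent_step[OF s, of 0] unfolding \<Delta>_def by simp
  moreover have "0 \<le> Wsq w (\<Delta> - (s - lam 0))" by (rule Wsq_nonneg[of w, OF w_pos])
  then have "2 * Winner w \<Delta> (s - lam 0) \<le> Wsq w \<Delta> + Wsq w (s - lam 0)"
    unfolding Wsq_diff by simp
  ultimately show ?thesis by linarith
qed

lemma gap_le_error_bound:
  assumes p: "p \<in> D" "\<And>\<mu>. \<mu> \<in> D \<Longrightarrow> d \<mu> \<le> d p" and s: "s \<in> D"
    and eb: "Wnorm w (lam k - p) \<le> \<kappa> * Wnorm w (lam (Suc k) - lam k)"
  shows "d s - d (lam (Suc k)) \<le> \<kappa> * Wsq w (lam (Suc k) - lam k)"
proof -
  define \<Delta> where "\<Delta> = lam (Suc k) - lam k"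
  have "d s - d (lam (Suc k)) \<le> d p - d (lam (Suc k))" using p(2)[OF s] by simp
  also have "\<dots> \<le> Winner w \<Delta> (p - lam k)"
    using ascent_step[OF p(1), of k] Wsq_nonneg[of w \<Delta>, OF w_pos] unfolding \<Delta>_def by simp
  also have "\<dots> \<le> Wnorm w \<Delta> * Wnorm w (lam k - p)"
    using Winner_le_Wnorm[of w, OF w_pos] Wnorm_minus_commute by metis
  also have "\<dots> \<le> Wnorm w \<Delta> * (\<kappa> * Wnorm w \<Delta>)"
    using eb Wnorm_nonneg[of w, OF w_pos] unfolding \<Delta>_def by (simp add: mult_left_mono)
  also have "\<dots> = \<kappa> * Wsq w \<Delta>" using Wnorm_sq[of w, OF w_pos] by (simp add: power2_eq_square)
  finally show ?thesis unfolding \<Delta>_def .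
qed

lemma step_length_rate:
  assumes S: "compact S" "S \<noteq> {}" "S \<subseteq> D" and max: "\<And>s \<mu>. s \<in> S \<Longrightarrow> \<mu> \<in> D \<Longrightarrow> d \<mu> \<le> d s"
    and eb: "\<And>k. Tdist w S (lam k) \<le> Tdist w S (lam 0) \<Longrightarrow>
        Wnorm w (lam k - projW w S (lam k)) \<le> \<kappa> * Wnorm w (lam (Suc k) - lam k)"
    and k: "1 \<le> k"
  shows "Wnorm w (lam (Suc k) - lam k)
    \<le> (4 * (1 + \<kappa>) / (1 + 4 * (1 + \<kappa>))) powr ((real k - 2) / 2) * Rdist w S (lam 0)"
proof -
  obtain s0 where s0: "s0 \<in> S" and R: "Rdist w S (lam 0) = Wnorm w (s0 - lam 0)"
    using Rdist_attained[OF S(1,2)] by blast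
  have s0D: "s0 \<in> D" using s0 S(3) by blast
  show ?thesis unfolding Wnorm_Wsq[of w "lam (Suc k) - lam k"] R
  proof (rule linear_rate[where e="\<lambda>i. d s0 - d (lam i)" and W="\<lambda>i. Wsq w (lam (Suc i) - lam i)"])
    show "0 \<le> d s0 - d (lam i)" for i using max[OF s0 lam_in] by simp
    show "0 \<le> Wsq w (lam (Suc i) - lam i)" for i by (rule Wsq_nonneg[of w, OF w_pos])
    show "Wsq w (lam (Suc i) - lam i) \<le> 2 * ((d s0 - d (lam i)) - (d s0 - d (lam (Suc i))))" for i
      using sufficient_ascent by simp
    show "d s0 - d (lam (Suc i)) \<le> \<kappa> * Wsq w (lam (Suc i) - lam i)" for i
      using gap_le_error_bound[OF _ _ s0D eb[OF Tdist_le_initial[OF S max]]]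
        projW_in[OF S(1,2)] S(3) max by blast
    show "2 * (d s0 - d (lam 1)) \<le> (Wnorm w (s0 - lam 0))\<^sup>2"
      using first_gap[OF s0D] Wnorm_sq[of w, OF w_pos] by simp
    show "0 \<le> Wnorm w (s0 - lam 0)" by (rule Wnorm_nonneg[of w, OF w_pos])
  qed (rule k)
qed

end

theorem theorem3:
  fixes f :: "'b::finite \<Rightarrow> real^'n \<Rightarrow> real"
    and blk :: "'n::finite \<Rightarrow> 'b"
    and \<sigma> L :: "'b \<Rightarrow> real"
    and G :: "real^'n^'r::finite" and g :: "real^'r"
    and isIneq :: "'r \<Rightarrow> bool"
    and rb :: "'r \<Rightarrow> 'j::finite" and E :: "'j \<Rightarrow> 'b \<Rightarrow> bool"
    and lam :: "nat \<Rightarrow> real^'r" and z :: "nat \<Rightarrow> real^'n"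
    and \<kappa> :: real and k :: nat
  defines "w \<equiv> Wdiag G blk rb E \<sigma>"
    and "\<Lambda>s \<equiv> dualopt f G g isIneq"
    and "\<rho> \<equiv> 4 * (1 + \<kappa>) / (1 + 4 * (1 + \<kappa>))"
  assumes E_sparsity: "\<And>j i r c. \<not> E j i \<Longrightarrow> rb r = j \<Longrightarrow> blk c = i \<Longrightarrow> G $ r $ c = 0"
    and f_block: "\<And>i. depends_on_block blk i (f i)"
    and sigma_pos: "\<And>i. \<sigma> i > 0"
    and f_sconv: "\<And>i. block_strongly_convex blk i (\<sigma> i) (f i)"
    and f_lip: "\<And>i. block_lipschitz_gradient blk i (L i) (f i)"
    and A_full_row_rank: "\<And>c. (\<Sum>r\<in>{r. \<not> isIneq r}. c r *\<^sub>R row r G) = 0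
                              \<Longrightarrow> \<forall>r. \<not> isIneq r \<longrightarrow> c r = 0"
    and slater: "\<exists>zt. \<forall>r. (\<not> isIneq r \<longrightarrow> (G *v zt) $ r = g $ r)
                        \<and> (isIneq r \<longrightarrow> (G *v zt) $ r < g $ r)"
    and W_pos: "\<And>r. w r > 0"
    and lam0: "lam 0 \<in> Dset isIneq"
    and z_min: "\<And>k z'. Lag f G g (z k) (lam k) \<le> Lag f G g z' (lam k)"
    and lam_step: "\<And>k. lam (Suc k) = projD isIneq (lam k + Winv w (G *v z k - g))"
    and error_bound: "\<And>lm. lm \<in> Dset isIneq \<Longrightarrow> Tdist w \<Lambda>s lm \<le> Tdist w \<Lambda>s (lam 0) \<Longrightarrow>
          Wnorm w (lm - projW w \<Lambda>s lm) \<le> \<kappa> * Wnorm w (gradplus f G g isIneq w lm)"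
    and k_ge: "k \<ge> 1"
  shows "Winvnorm w (projD isIneq (G *v z k - g))
           \<le> \<rho> powr ((real k - 2) / 2) * Rdist w \<Lambda>s (lam 0)"
proof -
  define d where "d = dualfun f G g"
  have lamD: "lam k \<in> Dset isIneq" for k by (cases k) (simp_all add: lam0 lam_step projD_in)
  interpret weighted_projected_ascent w d "Dset isIneq" lam
    by unfold_locales (use W_pos lamD in \<open>simp_all add: d_def dual_ascent_step[OF f_sconv
        sigma_pos E_sparsity w_def[THEN meta_eq_to_obj_eq] W_pos z_min z_min lam_step]\<close>)
  have \<Lambda>s: "compact \<Lambda>s" "\<Lambda>s \<noteq> {}" "\<Lambda>s \<subseteq> Dset isIneq"
    and max: "\<And>s \<mu>. s \<in> \<Lambda>s \<Longrightarrow> \<mu> \<in> Dset isIneq \<Longrightarrow> d \<mu> \<le> d s"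
    using dualopt_nonempty_compact[OF f_sconv sigma_pos A_full_row_rank slater lam0]
    unfolding \<Lambda>s_def d_def dualopt_def by auto
  have gradplus: "gradplus f G g isIneq w (lam i) = lam (Suc i) - lam i" for i
    using gradplus_eq_step[OF f_sconv sigma_pos z_min projW_Dset[OF W_pos]] lam_step by simp
  have "Winvnorm w (projD isIneq (G *v z k - g)) \<le> Wnorm w (lam (Suc k) - lam k)"
    unfolding Winvnorm_Winvsq Wnorm_Wsq
    by (rule real_sqrt_le_mono[OF projD_residual_le_step[OF W_pos lamD lam_step]])
  also have "\<dots> \<le> \<rho> powr ((real k - 2) / 2) * Rdist w \<Lambda>s (lam 0)"
    unfolding \<rho>_def
    by (intro step_length_rate[OF \<Lambda>s _ _ k_ge] max error_bound[OF lamD, unfolded gradplus])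
  finally show ?thesis .
qed

end
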